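(* Suppose the rows of $\tilde{\mathbf Z}^\star$ can be represented in a $d_0$-dimensional Fourier basis, i.e. $\mathbf F^\star$ has at most $d_0$ nonzero columns. Then $d=\operatorname{rank}(\mathbf R^\star)\le 2d_0$, and there exists $\tilde{\mathbf W}\in\mathbb O_T$ such that $$\begin{bmatrix}\operatorname{ASE}(\mathbf R^\star,d) & \mathbf 0\end{bmatrix}=\frac1{\sqrt T}\mathbf F^\star\mathbf K^{1/2}\tilde{\mathbf W},$$ where $\mathbf 0$ is the $n\times(T-d)$ zero matrix.
   Context: Let $\mathbf Z^\star\in\mathbb R^{n\times T}$ have rows $\mathbf Z^\star_i$ with $\sigma^{\star2}_i=\frac1T\|\mathbf M\mathbf Z^\star_i\|^2>0$, where $\mathbf M=\mathbf I-\frac1T\mathbf J$ is the centering projection ($\mathbf J$ all-ones). Let $\boldsymbol\Sigma^\star=\operatorname{diag}(\sigma^{\star2}_1,\dots,\sigma^{\star2}_n)$, $\tilde{\mathbf Z}^\star=\frac1{\sqrt T}(\boldsymbol\Sigma^\star)^{-1/2}\mathbf Z^\star\mathbf M$, and $\mathbf R^\star=\tilde{\mathbf Z}^\star\tilde{\mathbf Z}^{\star\top}$ (the correlation matrix of the rows of $\mathbf Z^\star$). Let $\mathbf F^\star\in\mathbb C^{n\times T}$ have entries $F^\star_{i,k}=\sum_{t=1}^T\tilde Z^\star_{i,t}\exp\{-2\pi\mathrm i(k-1)(t-1)/T\}$. Let $\mathbf K\in\mathbb R^{T\times T}$ be the permutation matrix with $K_{s,t}=1$ if $s=t=1$ or $s+t=T+2$,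 and $0$ otherwise; with $\mathbf P_\pm$ the orthogonal projections onto its $\pm1$ eigenspaces, $\mathbf K^{1/2}=\mathbf P_++\mathrm i\,\mathbf P_-$. For a symmetric $\mathbf A\in\mathbb R^{n\times n}$, $\operatorname{ASE}(\mathbf A,d)=\mathbf V|\mathbf D|^{1/2}$, where $\mathbf D$ is the diagonal matrix of the $d$ largest-magnitude eigenvalues of $\mathbf A$ and $\mathbf V\in\mathbb R^{n\times d}$ holds corresponding orthonormal eigenvectors. $\mathbb O_T$ denotes the $T\times T$ orthogonal matrices. *)

theory Defs
  imports Complex_Main "Jordan_Normal_Form.Matrix" "Jordan_Normal_Form.DL_Rank"
begin

(* Convention: all matrices are 0-indexed (Jordan_Normal_Form 'mat');
   the paper's index k (resp. t, s) corresponds to k-1 here. *)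

definition centering :: "nat \<Rightarrow> real mat" where
  "centering T = 1\<^sub>m T - (1 / real T) \<cdot>\<^sub>m mat T T (\<lambda>_. 1)"

definition sigma2 :: "real mat \<Rightarrow> nat \<Rightarrow> real" where
  "sigma2 Z i = (let T = dim_col Z; c = centering T *\<^sub>v row Z i
                 in (1 / real T) * (\<Sum>t<T. (c $ t)^2))"

definition Sigma_inv_sqrt :: "real mat \<Rightarrow> real mat" where
  "Sigma_inv_sqrt Z = mat (dim_row Z) (dim_row Z)
     (\<lambda>(i,j). if i = j then 1 / sqrt (sigma2 Z i) else 0)"

definition Ztilde :: "real mat \<Rightarrow> real mat" where
  "Ztilde Z = (1 / sqrt (real (dim_col Z))) \<cdot>\<^sub>m
     (Sigma_inv_sqrt Z * Z * centering (dim_col Z))"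

definition corr_mat :: "real mat \<Rightarrow> real mat" where
  "corr_mat Z = Ztilde Z * (Ztilde Z)\<^sup>T"

definition fourier_mat :: "real mat \<Rightarrow> complex mat" where
  "fourier_mat Z = (let T = dim_col Z in
     mat (dim_row Z) T (\<lambda>(i,k). \<Sum>t<T. complex_of_real (Ztilde Z $$ (i,t)) *
        exp (- (2 * of_real pi * \<i> * of_nat k * of_nat t / of_nat T))))"

definition Kmat :: "nat \<Rightarrow> real mat" where
  "Kmat T = mat T T (\<lambda>(s,t). if (s = 0 \<and> t = 0) \<or> s + t = T then 1 else 0)"

text \<open>Orthogonal projections onto the +1 / -1 eigenspaces of the symmetric
  involution K: P_+ = (I+K)/2, P_- = (I-K)/2.\<close>
definition Pplus :: "nat \<Rightarrow> real mat" where
  "Pplus T = (1/2) \<cdot>\<^sub>m (1\<^sub>m T + Kmat T)"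
definition Pminus :: "nat \<Rightarrow> real mat" where
  "Pminus T = (1/2) \<cdot>\<^sub>m (1\<^sub>m T - Kmat T)"

definition Ksqrt :: "nat \<Rightarrow> complex mat" where
  "Ksqrt T = map_mat complex_of_real (Pplus T) + \<i> \<cdot>\<^sub>m map_mat complex_of_real (Pminus T)"

definition orth_mats :: "nat \<Rightarrow> real mat set" where
  "orth_mats T = {W. W \<in> carrier_mat T T \<and> W\<^sup>T * W = 1\<^sub>m T}"

text \<open>X is an adjacency spectral embedding ASE(A,d) of the symmetric n x n
  matrix A: X = V |D|^{1/2}, where D holds the d largest-magnitude eigenvalues
  and V corresponding orthonormal eigenvectors. Equivalently, the columns of V
  are the first d columns of an orthogonal eigenvector matrix U of
  A = U diag(lambda) U^T with eigenvalues ordered by decreasing magnitude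
  (ASE is determined only up to this choice; any choice is allowed).\<close>
definition is_ASE :: "real mat \<Rightarrow> nat \<Rightarrow> real mat \<Rightarrow> bool" where
  "is_ASE A d X \<longleftrightarrow> (let n = dim_row A in
     d \<le> n \<and>
     (\<exists>U lam. U \<in> orth_mats n \<and>
        A = U * mat n n (\<lambda>(i,j). if i = j then lam i else 0) * U\<^sup>T \<and>
        (\<forall>i j. i \<le> j \<and> j < n \<longrightarrow> \<bar>lam j\<bar> \<le> \<bar>lam i\<bar>) \<and>
        X = mat n d (\<lambda>(i,j). U $$ (i,j) * sqrt \<bar>lam j\<bar>)))"

definition pad_zero_cols :: "real mat \<Rightarrow> nat \<Rightarrow> real mat" where
  "pad_zero_cols X T = mat (dim_row X) T (\<lambda>(i,j). if j < dim_col X then X $$ (i,j) else 0)"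

end

theory Submission
  imports Defs
begin

(* Write A for Ztilde Z and H for the T x T Hartley matrix with entries
   cas (2 pi k t / T) = cos (2 pi k t / T) + sin (2 pi k t / T).  Since A is real, column T - k
   of its DFT F is the complex conjugate of column k, and K^(1/2) = P_+ + i P_- mixes exactly
   these two columns, so that F K^(1/2) = A H.  As G = H / sqrt T is orthogonal, Y = A G
   satisfies Y Y^T = A A^T = R, and column k of Y vanishes whenever column k of F does; hence
   rank R <= rank Y <= d0, which is even sharper than the claimed bound 2 d0.
   Finally, if Y Y^T = U diag(lam) U^T with U orthogonal, the vectors Y^T u_j are pairwise
   orthogonal with squared norms lam_j; normalising the nonzero ones and completing them to an
   orthonormal basis gives an orthogonal W with Y W = [ASE(R, d) 0]. *)

context vec_space
begin

lemma rank_mono_span: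
  assumes A: "A \<in> carrier_mat n na" and B: "B \<in> carrier_mat n nb"
    and sub: "set (cols A) \<subseteq> span (set (cols B))"
  shows "rank A \<le> rank B"
proof -
  have Bc: "set (cols B) \<subseteq> carrier_vec n" using B cols_dim by blast
  have vs: "vectorspace class_ring (vs (span (set (cols B))))"
    using span_is_subspace[THEN subspace_is_vs, OF Bc] by auto
  have sm: "submodule class_ring (span (set (cols B))) V" by (simp add: span_is_submodule Bc)
  have ss: "subspace class_ring (span (set (cols A))) (vs (span (set (cols B))))"
    using vectorspace.span_is_subspace[OF vs, of "set (cols A)",
        unfolded span_li_not_depend(1)[OF sub sm]] sub
    by auto
  have fd: "vectorspace.fin_dim class_ring (vs (span (set (cols B))))"
       "vectorspace.fin_dim class_ring (vs (span (set (cols B)))\<lparr>carrier := span (set (cols A))\<rparr>)"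
    using fin_dim_span_cols A B by auto
  show ?thesis unfolding rank_def using vectorspace.subspace_dim[OF vs ss fd] by simp
qed

lemma mult_mat_vec_in_span:
  assumes A: "A \<in> carrier_mat n na" and v: "v \<in> carrier_vec na"
  shows "A *\<^sub>v v \<in> span (set (cols A))"
proof -
  have Ac: "set (cols A) \<subseteq> carrier_vec n" using A cols_dim by blast
  have "lincomb_list (\<lambda>i. v $ i) (cols A)
      = mat_of_cols n (cols A) *\<^sub>v vec (length (cols A)) (\<lambda>i. v $ i)"
    by (rule lincomb_list_as_mat_mult) (use Ac in auto)
  also have "\<dots> = A *\<^sub>v v"
    using A v by (metis carrier_matD(1) carrier_matD(2) carrier_vecD cols_length mat_of_cols_cols
        vec_eq_iff index_vec dim_vec)
  finally have "A *\<^sub>v v \<in> span_list (cols A)"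
    unfolding span_list_def by (metis (mono_tags) mem_Collect_eq)
  thus ?thesis using span_list_as_span[OF Ac] by simp
qed

lemma rank_mult_right_le:
  assumes A: "A \<in> carrier_mat n na" and C: "C \<in> carrier_mat na nc"
  shows "rank (A * C) \<le> rank A"
proof (rule rank_mono_span[OF _ A])
  show "A * C \<in> carrier_mat n nc" using A C by auto
  show "set (cols (A * C)) \<subseteq> span (set (cols A))"
  proof
    fix x assume "x \<in> set (cols (A * C))"
    then obtain j where j: "j < nc" "x = col (A * C) j" using A C
      by (metis cols_length cols_nth in_set_conv_nth carrier_matD(2) index_mult_mat(3))
    then have "x = A *\<^sub>v col C j" using col_mult2[OF A C j(1)] by simp
    thus "x \<in> span (set (cols A))" using mult_mat_vec_in_span[OF A, of "col C j"] C by auto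
  qed
qed

lemma rank_eq_dim_col_if_inj:
  assumes A: "A \<in> carrier_mat n k"
    and inj: "\<And>v. v \<in> carrier_vec k \<Longrightarrow> A *\<^sub>v v = 0\<^sub>v n \<Longrightarrow> v = 0\<^sub>v k"
  shows "rank A = k"
proof -
  have dist: "distinct (cols A)"
  proof (rule ccontr)
    assume "\<not> distinct (cols A)"
    then obtain i j where ij: "i < k" "j < k" "i \<noteq> j" "col A i = col A j" using A
      by (metis carrier_matD(2) cols_length cols_nth distinct_conv_nth)
    have unit: "A *\<^sub>v unit_vec k l = col A l" if "l < k" for l
      using A that by (intro eq_vecI) (auto simp: scalar_prod_right_unit)
    define v :: "'a vec" where "v = unit_vec k i - unit_vec k j"
    have "A *\<^sub>v v = col A i - col A j"
      unfolding v_def using A ij by (simp add: mult_minus_distrib_mat_vec unit)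
    then have "v = 0\<^sub>v k" using inj ij(4) A unfolding v_def by auto
    moreover have "v $ i = 1" using ij unfolding v_def by auto
    ultimately show False using ij by auto
  qed
  have "lin_indpt (set (cols A))"
  proof
    assume "lin_dep (set (cols A))"
    then obtain v where "v \<in> carrier_vec k" "v \<noteq> 0\<^sub>v k" "A *\<^sub>v v = 0\<^sub>v n"
      using lin_depE[OF A _ dist] by blast
    thus False using inj by auto
  qed
  thus ?thesis using lin_indpt_full_rank[OF A dist] by auto
qed

lemma rank_le_card_nonzero_cols:
  assumes Y: "Y \<in> carrier_mat n T"
  shows "rank Y \<le> card {k. k < T \<and> col Y k \<noteq> 0\<^sub>v n}"
proof -
  define cs where "cs = filter (\<lambda>c. c \<noteq> 0\<^sub>v n) (cols Y)"
  have cs: "set cs \<subseteq> carrier_vec n" unfolding cs_def using cols_dim[of Y] Y by auto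
  have B: "mat_of_cols n cs \<in> carrier_mat n (length cs)" by simp
  have "set (cols Y) \<subseteq> span (set (cols (mat_of_cols n cs)))"
  proof
    fix c assume c: "c \<in> set (cols Y)"
    show "c \<in> span (set (cols (mat_of_cols n cs)))"
    proof (cases "c = 0\<^sub>v n")
      case True
      have "set (cols (mat_of_cols n cs)) \<subseteq> carrier_vec n" using cs by simp
      then show ?thesis using True
        by (metis span_is_submodule submodule.zero_closed module_vec_simps(2))
    next
      case False
      then have "c \<in> set cs" unfolding cs_def using c by simp
      then show ?thesis using cs by (simp add: span_mem)
    qed
  qed
  then have "rank Y \<le> rank (mat_of_cols n cs)" by (rule rank_mono_span[OF Y B])
  also have "\<dots> \<le> length cs" by (rule rank_le_nc[OF B])
  also have "length cs = card {k. k < T \<and> col Y k \<noteq> 0\<^sub>v n}"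
    unfolding cs_def length_filter_conv_card using Y by (intro arg_cong[where f = card]) auto
  finally show ?thesis .
qed

end

lemma rank_gram_le_rank:
  fixes Y :: "'a :: field mat"
  assumes "Y \<in> carrier_mat n T"
  shows "vec_space.rank n (Y * Y\<^sup>T) \<le> vec_space.rank n Y"
  using assms by (intro vec_space.rank_mult_right_le[of _ n T _ n]) auto

lemma gram_mult_orthogonal:
  fixes A G :: "'a :: comm_ring_1 mat"
  assumes A: "A \<in> carrier_mat n T" and G: "G \<in> carrier_mat T T" and GGt: "G * G\<^sup>T = 1\<^sub>m T"
  shows "(A * G) * (A * G)\<^sup>T = A * A\<^sup>T"
proof -
  have "(A * G) * (A * G)\<^sup>T = A * G * (G\<^sup>T * A\<^sup>T)"
    using transpose_mult[OF A G] by simp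
  also have "\<dots> = A * (G * G\<^sup>T * A\<^sup>T)"
    using A G by (simp add: assoc_mult_mat[of A n T G T _ n] assoc_mult_mat[of G T T _ T _ n])
  also have "\<dots> = A * (G * G\<^sup>T) * A\<^sup>T"
    using A G by (simp add: assoc_mult_mat[of A n T _ T _ n])
  finally show ?thesis using A GGt by simp
qed

lemma orth_mats_inner_cols:
  assumes W: "W \<in> orth_mats T" and ij: "i < T" "j < T"
  shows "col W i \<bullet> col W j = (if i = j then 1 else 0)"
proof -
  have WC: "W \<in> carrier_mat T T" and WtW: "W\<^sup>T * W = 1\<^sub>m T" using W unfolding orth_mats_def by auto
  have "(W\<^sup>T * W) $$ (i,j) = col W i \<bullet> col W j" using WC ij by simp
  then show ?thesis using WtW ij by simp
qed

lemma orth_mats_mult_transpose: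
  assumes "W \<in> orth_mats T"
  shows "W * W\<^sup>T = 1\<^sub>m T"
  using assms mat_mult_left_right_inverse[of "W\<^sup>T" T W] unfolding orth_mats_def by auto

lemma exists_unit_vec_orthogonal:
  fixes w :: "nat \<Rightarrow> real vec"
  assumes k: "k < T" and w: "\<And>i. i < k \<Longrightarrow> w i \<in> carrier_vec T"
  shows "\<exists>u \<in> carrier_vec T. (\<forall>i<k. w i \<bullet> u = 0) \<and> u \<bullet> u = 1"
proof -
  (* A has the rows w i and a zero last row, so it is singular; a kernel vector is orthogonal
     to every w i. *)
  define A :: "real mat"
    where "A = mat\<^sub>r T T (\<lambda>i. if i = T - 1 then 0\<^sub>v T else if i < k then w i else 0\<^sub>v T)"
  have A: "A \<in> carrier_mat T T" unfolding A_def by simp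
  have "det A = 0" unfolding A_def by (rule det_row_0) (use k w in auto)
  then obtain v where v: "v \<in> carrier_vec T" "v \<noteq> 0\<^sub>v T" "A *\<^sub>v v = 0\<^sub>v T"
    using det_0_iff_vec_prod_zero_field[OF A] by blast
  have orth: "w i \<bullet> v = 0" if i: "i < k" for i
  proof -
    have "(A *\<^sub>v v) $ i = w i \<bullet> v" using i k w[OF i] unfolding A_def by simp
    then show ?thesis using v(3) i k by simp
  qed
  define s where "s = v \<bullet> v"
  have "s > 0" unfolding s_def using conjugate_square_greater_0_vec[OF v(1)] v(2) by simp
  define u where "u = (1 / sqrt s) \<cdot>\<^sub>v v"
  have "u \<bullet> u = 1" unfolding u_def using v(1) \<open>s > 0\<close> by (simp add: s_def[symmetric])
  moreover have "w i \<bullet> u = 0" if "i < k" for i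
    unfolding u_def using orth[OF that] v(1) w[OF that] by simp
  moreover have "u \<in> carrier_vec T" unfolding u_def using v(1) by simp
  ultimately show ?thesis by blast
qed

lemma orthonormal_extension:
  fixes w :: "nat \<Rightarrow> real vec"
  assumes "k \<le> T" and "\<And>i. i < k \<Longrightarrow> w i \<in> carrier_vec T"
    and "\<And>i j. i < k \<Longrightarrow> j < k \<Longrightarrow> w i \<bullet> w j = (if i = j then 1 else 0)"
  shows "\<exists>W \<in> orth_mats T. \<forall>j<k. col W j = w j"
  using assms
proof (induction "T - k" arbitrary: k w)
  case 0
  then have k: "k = T" by simp
  define W where "W = mat T T (\<lambda>(t,j). w j $ t)"
  have col: "col W j = w j" if "j < T" for j
    using "0.prems"(2)[of j] that k unfolding W_def by (intro eq_vecI) auto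
  have "W\<^sup>T * W = 1\<^sub>m T"
    by (rule eq_matI) (use "0.prems"(3) k col in \<open>auto simp: W_def\<close>)
  then have "W \<in> orth_mats T" unfolding orth_mats_def W_def by simp
  then show ?case using col k by blast
next
  case (Suc m)
  then have k: "k < T" by simp
  obtain u where u: "u \<in> carrier_vec T" "\<And>i. i < k \<Longrightarrow> w i \<bullet> u = 0" "u \<bullet> u = 1"
    using exists_unit_vec_orthogonal[of k T w] k Suc.prems(2) by auto
  have uw: "u \<bullet> w i = 0" if "i < k" for i
    using u that Suc.prems(2)[OF that] by (metis comm_scalar_prod)
  define w' where "w' = w(k := u)"
  have "m = T - Suc k" using Suc.hyps(2) by simp
  moreover have "w' i \<in> carrier_vec T" if "i < Suc k" for i
    using that u(1) Suc.prems(2) unfolding w'_def by (auto simp: less_Suc_eq)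
  moreover have "w' i \<bullet> w' j = (if i = j then 1 else 0)" if "i < Suc k" "j < Suc k" for i j
    using that u uw Suc.prems(3) unfolding w'_def by (auto simp: less_Suc_eq)
  ultimately obtain W where "W \<in> orth_mats T" "\<forall>j<Suc k. col W j = w' j"
    using Suc.hyps(1)[of "Suc k" w'] k by auto
  then show ?case unfolding w'_def by (metis fun_upd_other less_SucI less_irrefl)
qed

lemma orth_mats_inner_zero_imp_zero:
  assumes U: "U \<in> orth_mats n" and v: "v \<in> carrier_vec n"
    and orth: "\<And>i. i < n \<Longrightarrow> col U i \<bullet> v = 0"
  shows "v = 0\<^sub>v n"
proof -
  have UC: "U \<in> carrier_mat n n" using U unfolding orth_mats_def by simp
  have "U\<^sup>T *\<^sub>v v = 0\<^sub>v n" using UC orth by (intro eq_vecI) auto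
  then have "(U * U\<^sup>T) *\<^sub>v v = U *\<^sub>v 0\<^sub>v n" using UC v by simp
  also have "\<dots> = 0\<^sub>v n" using UC by (intro eq_vecI) auto
  finally show ?thesis using orth_mats_mult_transpose[OF U] v by simp
qed

lemma col_mult_mat_diag:
  fixes A :: "'a :: comm_semiring_0 mat"
  assumes "A \<in> carrier_mat m n" and "k < n"
  shows "col (A * mat_diag n lam) k = lam k \<cdot>\<^sub>v col A k"
  using assms by (intro eq_vecI) (auto simp: mat_diag_mult_right mult.commute)

lemma orth_mats_diag_mult:
  assumes U: "U \<in> orth_mats n"
  shows "(U * mat_diag n lam * U\<^sup>T) * U = U * mat_diag n lam"
proof -
  have UC: "U \<in> carrier_mat n n" and UtU: "U\<^sup>T * U = 1\<^sub>m n" using U unfolding orth_mats_def by auto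
  have "(U * mat_diag n lam * U\<^sup>T) * U = U * mat_diag n lam * (U\<^sup>T * U)"
    using UC by (simp add: assoc_mult_mat[of "U * mat_diag n lam" n n _ n _ n])
  then show ?thesis using UC UtU right_mult_one_mat[of "U * mat_diag n lam" n n] by simp
qed

lemma orth_mats_diag_eigvec:
  assumes U: "U \<in> orth_mats n" and j: "j < n"
  shows "(U * mat_diag n lam * U\<^sup>T) *\<^sub>v col U j = lam j \<cdot>\<^sub>v col U j"
proof -
  have UC: "U \<in> carrier_mat n n" using U unfolding orth_mats_def by simp
  have "U * mat_diag n lam * U\<^sup>T \<in> carrier_mat n n" using UC by auto
  from col_mult2[OF this UC j] show ?thesis
    using orth_mats_diag_mult[OF U] col_mult_mat_diag[OF UC j] by simp
qed

lemma rank_orth_diag_ge: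
  assumes U: "U \<in> orth_mats n" and j: "j \<le> n" and nz: "\<And>i. i < j \<Longrightarrow> lam i \<noteq> 0"
  shows "j \<le> vec_space.rank n (U * mat_diag n lam * U\<^sup>T)"
proof -
  define M where "M = U * mat_diag n lam * U\<^sup>T"
  define E :: "real mat" where "E = mat n j (\<lambda>(r,c). if r = c then 1 else 0)"
  have UC: "U \<in> carrier_mat n n" and UtU: "U\<^sup>T * U = 1\<^sub>m n" using U unfolding orth_mats_def by auto
  have M: "M \<in> carrier_mat n n" and E: "E \<in> carrier_mat n j" unfolding M_def E_def using UC by auto
  have "M * U = U * mat_diag n lam" unfolding M_def by (rule orth_mats_diag_mult[OF U])
  have "vec_space.rank n ((M * U) * E) = j"
  proof (rule vec_space.rank_eq_dim_col_if_inj)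
    show "M * U * E \<in> carrier_mat n j" using M UC E by simp
    fix v :: "real vec" assume v: "v \<in> carrier_vec j" and "M * U * E *\<^sub>v v = 0\<^sub>v n"
    define x where "x = mat_diag n lam *\<^sub>v (E *\<^sub>v v)"
    have x: "x \<in> carrier_vec n"
      unfolding x_def using mult_mat_vec_carrier[OF mat_diag_dim mult_mat_vec_carrier[OF E v]] .
    have "U *\<^sub>v x = 0\<^sub>v n"
      using \<open>M * U * E *\<^sub>v v = 0\<^sub>v n\<close> UC E v unfolding x_def \<open>M * U = U * mat_diag n lam\<close>
      by (simp add: assoc_mult_mat_vec[of "U * mat_diag n lam" n n E j]
          assoc_mult_mat_vec[of U n n "mat_diag n lam" n])
    then have "(U\<^sup>T * U) *\<^sub>v x = U\<^sup>T *\<^sub>v 0\<^sub>v n" using UC x by simp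
    also have "\<dots> = 0\<^sub>v n" using UC by (intro eq_vecI) auto
    finally have x_zero: "x = 0\<^sub>v n" using x UtU by simp
    show "v = 0\<^sub>v j"
    proof (rule eq_vecI)
      fix i assume "i < dim_vec (0\<^sub>v j :: real vec)"
      then have i: "i < j" by simp
      have "x $ i = lam i * v $ i"
        using i j v unfolding x_def E_def
        by (simp add: mat_diag_def scalar_prod_def if_distrib[of "\<lambda>x. x * _"] cong: if_cong)
      then show "v $ i = 0\<^sub>v j $ i" using x_zero nz[OF i] i j by simp
    qed (use v in auto)
  qed
  moreover have "vec_space.rank n ((M * U) * E) \<le> vec_space.rank n M"
    using vec_space.rank_mult_right_le[of "M * U" n n E j]
      vec_space.rank_mult_right_le[OF M, of U n]
      M UC E by simp
  ultimately show ?thesis unfolding M_def by simp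
qed

lemma rank_orth_diag_le:
  fixes U :: "'a :: field mat"
  assumes U: "U \<in> carrier_mat n n" and zero: "\<And>i. j \<le> i \<Longrightarrow> i < n \<Longrightarrow> lam i = 0"
  shows "vec_space.rank n (U * mat_diag n lam * U\<^sup>T) \<le> j"
proof -
  have UD: "U * mat_diag n lam \<in> carrier_mat n n" using U by auto
  have "vec_space.rank n (U * mat_diag n lam * U\<^sup>T) \<le> vec_space.rank n (U * mat_diag n lam)"
    using UD U by (intro vec_space.rank_mult_right_le[of _ n n _ n]) auto
  also have "\<dots> \<le> card {k. k < n \<and> col (U * mat_diag n lam) k \<noteq> 0\<^sub>v n}"
    by (rule vec_space.rank_le_card_nonzero_cols[OF UD])
  also have "\<dots> \<le> card {..<j}"
  proof (rule card_mono)
    show "{k. k < n \<and> col (U * mat_diag n lam) k \<noteq> 0\<^sub>v n} \<subseteq> {..<j}"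
    proof (intro subsetI, rule ccontr)
      fix k assume k: "k \<in> {k. k < n \<and> col (U * mat_diag n lam) k \<noteq> 0\<^sub>v n}" and "k \<notin> {..<j}"
      then have "col (U * mat_diag n lam) k = 0\<^sub>v n"
        using col_mult_mat_diag[OF U, of k lam] zero[of k] U by (auto intro!: eq_vecI)
      with k show False by simp
    qed
  qed simp
  finally show ?thesis by simp
qed

lemma orth_diag_eigval_nonzero_iff:
  assumes U: "U \<in> orth_mats n" and i: "i < n"
    and sorted: "\<And>i j. i \<le> j \<Longrightarrow> j < n \<Longrightarrow> \<bar>lam j\<bar> \<le> \<bar>lam i\<bar>"
  shows "lam i \<noteq> 0 \<longleftrightarrow> i < vec_space.rank n (U * mat_diag n lam * U\<^sup>T)"
proof
  assume "lam i \<noteq> 0"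
  then have "lam l \<noteq> 0" if "l < Suc i" for l
    using sorted[of l i] that i by auto
  then have "Suc i \<le> vec_space.rank n (U * mat_diag n lam * U\<^sup>T)"
    using i by (intro rank_orth_diag_ge[OF U]) auto
  then show "i < vec_space.rank n (U * mat_diag n lam * U\<^sup>T)" by simp
next
  assume rank: "i < vec_space.rank n (U * mat_diag n lam * U\<^sup>T)"
  have UC: "U \<in> carrier_mat n n" using U unfolding orth_mats_def by simp
  show "lam i \<noteq> 0"
  proof
    assume "lam i = 0"
    then have "lam l = 0" if "i \<le> l" "l < n" for l
      using sorted[OF that] by simp
    then show False using rank_orth_diag_le[OF UC, of i lam] rank by simp
  qed
qed

lemma gram_orth_diag_inner:
  fixes Y :: "real mat"
  assumes Y: "Y \<in> carrier_mat n T" and U: "U \<in> orth_mats n"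
    and R: "Y * Y\<^sup>T = U * mat_diag n lam * U\<^sup>T" and ij: "i < n" "j < n"
  shows "(Y\<^sup>T *\<^sub>v col U i) \<bullet> (Y\<^sup>T *\<^sub>v col U j) = (if i = j then lam j else 0)"
proof -
  have UC: "U \<in> carrier_mat n n" using U unfolding orth_mats_def by simp
  have colU: "col U l \<in> carrier_vec n" for l using UC by (metis carrier_matD(1) col_dim)
  have "(Y\<^sup>T *\<^sub>v col U i) \<bullet> (Y\<^sup>T *\<^sub>v col U j) = col U i \<bullet> (Y *\<^sub>v (Y\<^sup>T *\<^sub>v col U j))"
    using transpose_vec_mult_scalar[OF Y _ colU] Y colU by simp
  also have "Y *\<^sub>v (Y\<^sup>T *\<^sub>v col U j) = lam j \<cdot>\<^sub>v col U j"
    using orth_mats_diag_eigvec[OF U ij(2), of lam, folded R]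
      assoc_mult_mat_vec[OF Y _ colU, of "Y\<^sup>T"] Y
    by simp
  finally show ?thesis using orth_mats_inner_cols[OF U ij] colU by simp
qed

lemma normalized_orthogonal_extension:
  fixes a :: "nat \<Rightarrow> real vec"
  assumes d: "d \<le> T" and a: "\<And>i. i < d \<Longrightarrow> a i \<in> carrier_vec T"
    and inner: "\<And>i j. i < d \<Longrightarrow> j < d \<Longrightarrow> a i \<bullet> a j = (if i = j then lam j else 0)"
    and pos: "\<And>i. i < d \<Longrightarrow> lam i > 0"
  shows "\<exists>W \<in> orth_mats T. \<forall>j<d. a j = sqrt (lam j) \<cdot>\<^sub>v col W j"
proof -
  define w where "w i = (1 / sqrt (lam i)) \<cdot>\<^sub>v a i" for i
  have "w i \<bullet> w j = (if i = j then 1 else 0)" if "i < d" "j < d" for i j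
  proof -
    have "w i \<bullet> w j = 1 / sqrt (lam i) * (1 / sqrt (lam j)) * (a i \<bullet> a j)"
      unfolding w_def using a[OF that(1)] a[OF that(2)] by simp
    then show ?thesis
      using inner[OF that] pos[OF that(1)] by (cases "i = j") (simp_all add: real_sqrt_mult_self)
  qed
  then obtain W where W: "W \<in> orth_mats T" and colW: "\<forall>j<d. col W j = w j"
    using orthonormal_extension[of d T w] d a unfolding w_def by auto
  have "a j = sqrt (lam j) \<cdot>\<^sub>v col W j" if "j < d" for j
    using colW pos[OF that] a[OF that] that unfolding w_def by (simp add: smult_smult_assoc)
  with W show ?thesis by blast
qed

lemma gram_eigendecomp_polar:
  fixes Y :: "real mat"
  assumes Y: "Y \<in> carrier_mat n T" and U: "U \<in> orth_mats n"
    and R: "Y * Y\<^sup>T = U * mat_diag n lam * U\<^sup>T"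
    and d: "d \<le> n" "d \<le> T" and nz: "\<And>i. i < n \<Longrightarrow> lam i \<noteq> 0 \<longleftrightarrow> i < d"
  shows "\<exists>W \<in> orth_mats T.
    Y * W = mat n T (\<lambda>(r,j). if j < d then U $$ (r,j) * sqrt \<bar>lam j\<bar> else 0)"
proof -
  have UC: "U \<in> carrier_mat n n" using U unfolding orth_mats_def by simp
  have colU: "col U i \<in> carrier_vec n" for i using UC by (metis carrier_matD(1) col_dim)
  define a where "a i = Y\<^sup>T *\<^sub>v col U i" for i
  have a: "a i \<in> carrier_vec T" for i
    unfolding a_def by (rule mult_mat_vec_carrier[OF _ colU]) (use Y in simp)
  have aa: "a i \<bullet> a j = (if i = j then lam j else 0)" if "i < n" "j < n" for i j
    unfolding a_def by (rule gram_orth_diag_inner[OF Y U R that])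
  have pos: "lam i > 0" if "i < d" for i
  proof -
    have "lam i = a i \<bullet> a i" using aa[of i i] that d by simp
    then have "lam i \<ge> 0" using conjugate_square_ge_0_vec[of "a i"] by simp
    then show ?thesis using nz[of i] that d by simp
  qed
  have a_zero: "a i = 0\<^sub>v T" if "d \<le> i" "i < n" for i
  proof -
    have "a i \<bullet> a i = 0" using aa[of i i] nz[of i] that by simp
    then show ?thesis using conjugate_square_greater_0_vec[OF a[of i]] by simp
  qed
  obtain W where W: "W \<in> orth_mats T" and aW: "\<And>j. j < d \<Longrightarrow> a j = sqrt (lam j) \<cdot>\<^sub>v col W j"
    using normalized_orthogonal_extension[of d T a lam] d a aa pos by auto
  have WC: "W \<in> carrier_mat T T" using W unfolding orth_mats_def by simp
  have colW: "col W j \<in> carrier_vec T" for j using WC by (metis carrier_matD(1) col_dim)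
  have Yw: "Y *\<^sub>v col W j = sqrt (lam j) \<cdot>\<^sub>v col U j" if "j < d" for j
  proof -
    have "Y *\<^sub>v a j = (sqrt (lam j) * sqrt (lam j)) \<cdot>\<^sub>v col U j"
      using orth_mats_diag_eigvec[OF U, of j lam, folded R] assoc_mult_mat_vec[OF Y _ colU, of "Y\<^sup>T"]
        pos[OF that] Y that d unfolding a_def by simp
    moreover have "Y *\<^sub>v col W j = (1 / sqrt (lam j)) \<cdot>\<^sub>v (Y *\<^sub>v a j)"
      using aW[OF that] pos[OF that] Y colW by (simp add: mult_mat_vec smult_smult_assoc)
    ultimately show ?thesis using pos[OF that] by (simp add: smult_smult_assoc real_div_sqrt)
  qed
  have Yw_zero: "Y *\<^sub>v col W j = 0\<^sub>v n" if "d \<le> j" "j < T" for j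
  proof (rule orth_mats_inner_zero_imp_zero[OF U])
    show "Y *\<^sub>v col W j \<in> carrier_vec n" using Y colW by simp
    fix i assume i: "i < n"
    have "col U i \<bullet> (Y *\<^sub>v col W j) = a i \<bullet> col W j"
      unfolding a_def using transpose_vec_mult_scalar[OF Y colW colU] by simp
    also have "\<dots> = 0"
    proof (cases "i < d")
      case True
      then show ?thesis using aW[OF True] orth_mats_inner_cols[OF W, of i j] that d colW by simp
    qed (use a_zero i colW in auto)
    finally show "col U i \<bullet> (Y *\<^sub>v col W j) = 0" .
  qed
  have "Y * W = mat n T (\<lambda>(r,j). if j < d then U $$ (r,j) * sqrt \<bar>lam j\<bar> else 0)"
  proof (rule mat_col_eqI)
    fix j assume "j < dim_col (mat n T (\<lambda>(r,j). if j < d then U $$ (r,j) * sqrt \<bar>lam j\<bar> else 0))"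
    then have j: "j < T" by simp
    then have YW: "col (Y * W) j = Y *\<^sub>v col W j" by (rule col_mult2[OF Y WC])
    show "col (Y * W) j = col (mat n T (\<lambda>(r,j). if j < d then U $$ (r,j) * sqrt \<bar>lam j\<bar> else 0)) j"
    proof (cases "j < d")
      case True
      then show ?thesis
        using YW Yw[OF True] pos[OF True] UC j d by (auto simp: mult.commute intro!: eq_vecI)
    qed (use YW Yw_zero j in \<open>auto intro!: eq_vecI\<close>)
  qed (use Y WC in auto)
  with W show ?thesis by blast
qed

lemma is_ASE_gram_eq_mult_orth:
  fixes Y X :: "real mat"
  assumes Y: "Y \<in> carrier_mat n T" and X: "is_ASE (Y * Y\<^sup>T) (vec_space.rank n (Y * Y\<^sup>T)) X"
  shows "\<exists>W \<in> orth_mats T. Y * W = pad_zero_cols X T"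
proof -
  define d where "d = vec_space.rank n (Y * Y\<^sup>T)"
  have diag: "mat n n (\<lambda>(i,j). if i = j then lam i else 0) = mat_diag n lam" for lam :: "nat \<Rightarrow> real"
    by (auto simp: mat_diag_def)
  obtain U lam where dn: "d \<le> n" and U: "U \<in> orth_mats n"
    and R: "Y * Y\<^sup>T = U * mat n n (\<lambda>(i,j). if i = j then lam i else 0) * U\<^sup>T"
    and sorted: "\<And>i j. i \<le> j \<Longrightarrow> j < n \<Longrightarrow> \<bar>lam j\<bar> \<le> \<bar>lam i\<bar>"
    and X_eq: "X = mat n d (\<lambda>(i,j). U $$ (i,j) * sqrt \<bar>lam j\<bar>)"
    using X Y unfolding is_ASE_def Let_def d_def[symmetric] by auto
  note R = R[unfolded diag]
  have "d \<le> vec_space.rank n Y" unfolding d_def by (rule rank_gram_le_rank[OF Y])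
  also have "\<dots> \<le> T" by (rule vec_space.rank_le_nc[OF Y])
  finally have dT: "d \<le> T" .
  have "lam i \<noteq> 0 \<longleftrightarrow> i < d" if "i < n" for i
    using orth_diag_eigval_nonzero_iff[OF U that sorted] unfolding d_def R .
  then obtain W where "W \<in> orth_mats T"
    and "Y * W = mat n T (\<lambda>(r,j). if j < d then U $$ (r,j) * sqrt \<bar>lam j\<bar> else 0)"
    using gram_eigendecomp_polar[OF Y U R dn dT] by blast
  moreover have "pad_zero_cols X T
      = mat n T (\<lambda>(r,j). if j < d then U $$ (r,j) * sqrt \<bar>lam j\<bar> else 0)"
    unfolding X_eq pad_zero_cols_def by auto
  ultimately show ?thesis by auto
qed

lemma sum_roots_of_unity:
  fixes q :: int
  assumes T: "T > 0"
  shows "(\<Sum>t<T. cis (2 * pi * q * real t / real T)) = (if int T dvd q then of_nat T else 0)"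
proof -
  define z where "z = cis (2 * pi * q / real T)"
  have "cis (2 * pi * q * real t / real T) = z ^ t" for t
    unfolding z_def DeMoivre by (simp add: algebra_simps)
  then have sum: "(\<Sum>t<T. cis (2 * pi * q * real t / real T)) = (\<Sum>t<T. z ^ t)" by simp
  show ?thesis
  proof (cases "int T dvd q")
    case True
    then obtain m where "q = int T * m" by blast
    then have "2 * pi * q / real T = 2 * pi * m" using T by simp
    then have "z = 1" unfolding z_def by (simp add: cis_multiple_2pi)
    then show ?thesis using sum True by simp
  next
    case False
    have "z \<noteq> 1"
    proof
      assume "z = 1"
      then have "cos (2 * pi * q / real T) = 1"
        unfolding z_def by (metis cis.sel(1) one_complex.sel(1))
      then obtain x :: int where "2 * pi * q / real T = real_of_int x * 2 * pi"
        using cos_one_2pi_int by blast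
      then have "real_of_int q = x * real T" using T by (simp add: field_simps)
      then have "q = x * int T" by (metis of_int_eq_iff of_int_mult of_int_of_nat_eq)
      then show False using False by simp
    qed
    moreover have "z ^ T = 1" unfolding z_def DeMoivre using T by (simp add: cis_multiple_2pi)
    ultimately show ?thesis using sum False by (simp add: sum_gp_strict)
  qed
qed

definition hartley_mat :: "nat \<Rightarrow> real mat" where
  "hartley_mat T = mat T T (\<lambda>(t,k).
     cos (2 * pi * k * real t / real T) + sin (2 * pi * k * real t / real T))"

lemma hartley_mat_inner_cols:
  assumes j: "j < T" and k: "k < T"
  shows "(\<Sum>t<T. hartley_mat T $$ (t,j) * hartley_mat T $$ (t,k)) = (if j = k then real T else 0)"
proof -
  have T: "T > 0" using j by simp
  have "hartley_mat T $$ (t,j) * hartley_mat T $$ (t,k) =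
      cos (2 * pi * (int j - int k) * real t / real T)
      + sin (2 * pi * (int j + int k) * real t / real T)" if "t < T" for t
  proof -
    define a where "a = 2 * pi * j * real t / real T"
    define b where "b = 2 * pi * k * real t / real T"
    have "hartley_mat T $$ (t,j) * hartley_mat T $$ (t,k) = (cos a + sin a) * (cos b + sin b)"
      unfolding hartley_mat_def a_def b_def using that j k by simp
    also have "\<dots> = cos (a - b) + sin (a + b)" by (simp add: cos_diff sin_add algebra_simps)
    also have "a - b = 2 * pi * (int j - int k) * real t / real T"
      unfolding a_def b_def using T by (simp add: field_simps)
    also have "a + b = 2 * pi * (int j + int k) * real t / real T"
      unfolding a_def b_def using T by (simp add: field_simps)
    finally show ?thesis .
  qed
  then have "(\<Sum>t<T. hartley_mat T $$ (t,j) * hartley_mat T $$ (t,k)) =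
      Re (\<Sum>t<T. cis (2 * pi * (int j - int k) * real t / real T))
      + Im (\<Sum>t<T. cis (2 * pi * (int j + int k) * real t / real T))"
    by (simp add: Re_sum Im_sum sum.distrib)
  also have "\<dots> = (if int T dvd (int j - int k) then real T else 0)"
    unfolding sum_roots_of_unity[OF T] by simp
  also have "int T dvd (int j - int k) \<longleftrightarrow> j = k"
    using j k dvd_imp_le_int[of "int j - int k" "int T"] by (cases "j = k") (simp_all, arith)
  finally show ?thesis .
qed

lemma hartley_mat_orth: "(1 / sqrt T) \<cdot>\<^sub>m hartley_mat T \<in> orth_mats T"
proof -
  define c where "c = 1 / sqrt T"
  define G where "G = c \<cdot>\<^sub>m hartley_mat T"
  have G: "G \<in> carrier_mat T T" unfolding G_def hartley_mat_def by simp
  have "G\<^sup>T * G = 1\<^sub>m T"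
  proof (rule eq_matI)
    fix i j assume "i < dim_row (1\<^sub>m T :: real mat)" "j < dim_col (1\<^sub>m T :: real mat)"
    then have ij: "i < T" "j < T" by auto
    have "(G\<^sup>T * G) $$ (i,j) = (\<Sum>t<T. G $$ (t,i) * G $$ (t,j))"
      using G ij by (simp add: scalar_prod_def lessThan_atLeast0)
    also have "\<dots> = c * c * (\<Sum>t<T. hartley_mat T $$ (t,i) * hartley_mat T $$ (t,j))"
      unfolding sum_distrib_left
      by (rule sum.cong) (use ij in \<open>simp_all add: G_def hartley_mat_def mult_ac\<close>)
    also have "\<dots> = 1\<^sub>m T $$ (i,j)"
      unfolding hartley_mat_inner_cols[OF ij] c_def using ij by simp
    finally show "(G\<^sup>T * G) $$ (i,j) = 1\<^sub>m T $$ (i,j)" .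
  qed (use G in auto)
  then show ?thesis using G unfolding orth_mats_def G_def c_def by simp
qed

definition dft_mat :: "real mat \<Rightarrow> complex mat" where
  "dft_mat A = mat (dim_row A) (dim_col A) (\<lambda>(i,k). \<Sum>t<dim_col A. complex_of_real (A $$ (i,t)) *
     exp (- (2 * of_real pi * \<i> * of_nat k * of_nat t / of_nat (dim_col A))))"

lemma fourier_mat_eq_dft_mat: "fourier_mat Z = dft_mat (Ztilde Z)"
proof -
  have "dim_row (Ztilde Z) = dim_row Z" "dim_col (Ztilde Z) = dim_col Z"
    unfolding Ztilde_def Sigma_inv_sqrt_def centering_def by simp_all
  then show ?thesis unfolding fourier_mat_def dft_mat_def Let_def by simp
qed

lemma dft_mat_entry:
  assumes A: "A \<in> carrier_mat n T" and i: "i < n" and k: "k < T"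
  shows "dft_mat A $$ (i,k) = Complex (\<Sum>t<T. A $$ (i,t) * cos (2 * pi * k * real t / real T))
                                      (- (\<Sum>t<T. A $$ (i,t) * sin (2 * pi * k * real t / real T)))"
proof -
  have "exp (- (2 * of_real pi * \<i> * of_nat k * of_nat t / of_nat T)) =
      Complex (cos (2 * pi * k * real t / real T)) (- sin (2 * pi * k * real t / real T))" for t
  proof -
    have "- (2 * of_real pi * \<i> * of_nat k * of_nat t / of_nat T)
        = \<i> * complex_of_real (- (2 * pi * k * real t / real T))"
      by (simp add: field_simps)
    then have "exp (- (2 * of_real pi * \<i> * of_nat k * of_nat t / of_nat T))
        = cis (- (2 * pi * k * real t / real T))"
      by (simp only: cis_conv_exp)
    then show ?thesis by (simp add: complex_eq_iff)
  qed
  then show ?thesis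
    using A i k unfolding dft_mat_def by (simp add: complex_eq_iff Re_sum Im_sum sum_negf)
qed

definition reflect_index :: "nat \<Rightarrow> nat \<Rightarrow> nat" where
  "reflect_index T k = (if k = 0 then 0 else T - k)"

lemma dft_mat_reflect:
  assumes A: "A \<in> carrier_mat n T" and i: "i < n" and k: "k < T"
  shows "dft_mat A $$ (i, reflect_index T k) = cnj (dft_mat A $$ (i,k))"
proof (cases "k = 0")
  case True
  then show ?thesis using dft_mat_entry[OF A i k] by (simp add: reflect_index_def complex_eq_iff)
next
  case False
  have e: "2 * pi * real (T - k) * real t / real T
      = 2 * pi * real_of_int (int t) - 2 * pi * k * real t / real T" for t
    using k by (simp add: of_nat_diff field_simps)
  have "cos (2 * pi * real (T - k) * real t / real T) = cos (2 * pi * k * real t / real T)" for t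
    unfolding e cos_diff cos_int_2pin sin_int_2pin by simp
  moreover have "sin (2 * pi * real (T - k) * real t / real T)
      = - sin (2 * pi * k * real t / real T)" for t
    unfolding e sin_diff cos_int_2pin sin_int_2pin by simp
  moreover have "T - k < T" using False k by simp
  ultimately show ?thesis using dft_mat_entry[OF A i k] dft_mat_entry[OF A i, of "T - k"] False
    by (simp add: reflect_index_def complex_eq_iff sum_negf)
qed

lemma Ksqrt_entry:
  assumes s: "s < T" and k: "k < T"
  shows "Ksqrt T $$ (s,k) = (if s = k then (1 + \<i>) / 2 else 0)
    + (if s = reflect_index T k then (1 - \<i>) / 2 else 0)"
proof -
  have K: "Kmat T $$ (s,k) = (if s = reflect_index T k then 1 else 0)"
    unfolding Kmat_def reflect_index_def using s k by auto
  have "Ksqrt T $$ (s,k) = complex_of_real (((if s = k then 1 else 0) + Kmat T $$ (s,k)) / 2)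
      + \<i> * complex_of_real (((if s = k then 1 else 0) - Kmat T $$ (s,k)) / 2)"
    unfolding Ksqrt_def Pplus_def Pminus_def using s k by (simp add: Kmat_def)
  then show ?thesis unfolding K by (auto simp: complex_eq_iff)
qed

lemma hartley_entry:
  assumes A: "A \<in> carrier_mat n T" and i: "i < n" and k: "k < T"
  shows "(A * hartley_mat T) $$ (i,k) = Re (dft_mat A $$ (i,k)) - Im (dft_mat A $$ (i,k))"
proof -
  have "(A * hartley_mat T) $$ (i,k) = (\<Sum>t<T. A $$ (i,t) * hartley_mat T $$ (t,k))"
    using A i k by (simp add: hartley_mat_def scalar_prod_def lessThan_atLeast0)
  also have "\<dots> = (\<Sum>t<T. A $$ (i,t) * cos (2 * pi * k * real t / real T))
      + (\<Sum>t<T. A $$ (i,t) * sin (2 * pi * k * real t / real T))"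
    unfolding sum.distrib[symmetric]
    by (rule sum.cong) (use k in \<open>auto simp: hartley_mat_def distrib_left\<close>)
  finally show ?thesis using dft_mat_entry[OF A i k] by simp
qed

lemma dft_mat_mult_Ksqrt:
  assumes A: "A \<in> carrier_mat n T"
  shows "dft_mat A * Ksqrt T = map_mat complex_of_real (A * hartley_mat T)"
proof (rule eq_matI)
  have F: "dft_mat A \<in> carrier_mat n T" using A unfolding dft_mat_def by auto
  have K: "Ksqrt T \<in> carrier_mat T T" unfolding Ksqrt_def Pplus_def Pminus_def Kmat_def by auto
  fix i k assume "i < dim_row (map_mat complex_of_real (A * hartley_mat T))"
    "k < dim_col (map_mat complex_of_real (A * hartley_mat T))"
  then have i: "i < n" and k: "k < T" using A by (auto simp: hartley_mat_def)
  have rk: "reflect_index T k < T" using k by (simp add: reflect_index_def)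
  define f where "f = dft_mat A $$ (i,k)"
  have "(dft_mat A * Ksqrt T) $$ (i,k) = (\<Sum>s<T. dft_mat A $$ (i,s) * Ksqrt T $$ (s,k))"
    using F K i k by (simp add: scalar_prod_def lessThan_atLeast0)
  also have "\<dots> = (\<Sum>s<T. dft_mat A $$ (i,s) * (if s = k then (1 + \<i>) / 2 else 0)
      + dft_mat A $$ (i,s) * (if s = reflect_index T k then (1 - \<i>) / 2 else 0))"
    by (rule sum.cong) (use k in \<open>auto simp: Ksqrt_entry distrib_left\<close>)
  also have "\<dots> = f * ((1 + \<i>) / 2) + cnj f * ((1 - \<i>) / 2)"
    unfolding sum.distrib f_def dft_mat_reflect[OF A i k, symmetric] using k rk
    by (simp add: if_distrib cong: if_cong)
  also have "\<dots> = complex_of_real (Re f - Im f)" by (simp add: complex_eq_iff field_simps)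
  finally show "(dft_mat A * Ksqrt T) $$ (i,k)
      = map_mat complex_of_real (A * hartley_mat T) $$ (i,k)"
    using hartley_entry[OF A i k] A i k unfolding f_def by (simp add: hartley_mat_def)
qed (use A in \<open>auto simp: dft_mat_def Ksqrt_def Pplus_def Pminus_def Kmat_def hartley_mat_def\<close>)

lemma nonzero_cols_hartley_subset:
  assumes A: "A \<in> carrier_mat n T"
  shows "{k. k < T \<and> col (A * (c \<cdot>\<^sub>m hartley_mat T)) k \<noteq> 0\<^sub>v n}
    \<subseteq> {k. k < T \<and> col (dft_mat A) k \<noteq> 0\<^sub>v n}"
proof
  fix k assume "k \<in> {k. k < T \<and> col (A * (c \<cdot>\<^sub>m hartley_mat T)) k \<noteq> 0\<^sub>v n}"
  then have k: "k < T" and nz: "col (A * (c \<cdot>\<^sub>m hartley_mat T)) k \<noteq> 0\<^sub>v n" by auto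
  have H: "hartley_mat T \<in> carrier_mat T T" unfolding hartley_mat_def by simp
  have F: "dft_mat A \<in> carrier_mat n T" using A unfolding dft_mat_def by auto
  show "k \<in> {k. k < T \<and> col (dft_mat A) k \<noteq> 0\<^sub>v n}"
  proof (rule ccontr)
    assume "k \<notin> {k. k < T \<and> col (dft_mat A) k \<noteq> 0\<^sub>v n}"
    then have "dft_mat A $$ (i,k) = 0" if "i < n" for i
      using k that F by (metis (mono_tags) carrier_matD index_col index_zero_vec(1) mem_Collect_eq)
    then have "col (A * (c \<cdot>\<^sub>m hartley_mat T)) k = 0\<^sub>v n"
      using A H k hartley_entry[OF A _ k] by (intro eq_vecI) (auto simp: mult_smult_distrib)
    with nz show False ..
  qed
qed

lemma scaled_dft_Ksqrt_mult:
  assumes A: "A \<in> carrier_mat n T" and W: "W \<in> carrier_mat T T"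
  shows "complex_of_real c \<cdot>\<^sub>m (dft_mat A * Ksqrt T * map_mat complex_of_real W)
    = map_mat complex_of_real (A * (c \<cdot>\<^sub>m hartley_mat T) * W)"
proof -
  have H: "hartley_mat T \<in> carrier_mat T T" unfolding hartley_mat_def by simp
  have "dft_mat A * Ksqrt T * map_mat complex_of_real W
      = map_mat complex_of_real (A * hartley_mat T * W)"
    unfolding dft_mat_mult_Ksqrt[OF A]
    by (rule of_real_hom.mat_hom_mult[symmetric, of _ n T _ T]) (use A H W in auto)
  moreover have "A * (c \<cdot>\<^sub>m hartley_mat T) * W = c \<cdot>\<^sub>m (A * hartley_mat T * W)"
    using A H W by (simp add: mult_smult_distrib mult_smult_assoc_mat[of _ n T _ T])
  ultimately show ?thesis by (auto intro!: eq_matI)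
qed

theorem mainTheorem3:
  fixes Z :: "real mat" and n T d0 :: nat
  assumes dimZ: "Z \<in> carrier_mat n T"
    and sigma_pos: "\<forall>i<n. sigma2 Z i > 0"
    and fourier_sparse: "card {k. k < T \<and> col (fourier_mat Z) k \<noteq> 0\<^sub>v n} \<le> d0"
  shows "vec_space.rank n (corr_mat Z) \<le> 2 * d0 \<and>
    (\<forall>X. is_ASE (corr_mat Z) (vec_space.rank n (corr_mat Z)) X \<longrightarrow>
       (\<exists>W \<in> orth_mats T.
          map_mat complex_of_real (pad_zero_cols X T) =
          complex_of_real (1 / sqrt (real T)) \<cdot>\<^sub>m
            (fourier_mat Z * Ksqrt T * map_mat complex_of_real W)))"
proof -
  define A where "A = Ztilde Z"
  define Y where "Y = A * ((1 / sqrt (real T)) \<cdot>\<^sub>m hartley_mat T)"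
  have A: "A \<in> carrier_mat n T"
    unfolding A_def Ztilde_def Sigma_inv_sqrt_def centering_def using dimZ by auto
  have G: "(1 / sqrt (real T)) \<cdot>\<^sub>m hartley_mat T \<in> orth_mats T" by (rule hartley_mat_orth)
  then have Y: "Y \<in> carrier_mat n T" unfolding Y_def orth_mats_def using A by auto
  have R: "corr_mat Z = Y * Y\<^sup>T"
    using gram_mult_orthogonal[OF A _ orth_mats_mult_transpose[OF G]] G
    unfolding Y_def corr_mat_def A_def orth_mats_def by simp
  have F: "fourier_mat Z = dft_mat A" unfolding A_def by (rule fourier_mat_eq_dft_mat)
  have "vec_space.rank n (corr_mat Z) \<le> card {k. k < T \<and> col Y k \<noteq> 0\<^sub>v n}"
    unfolding R using rank_gram_le_rank[OF Y] vec_space.rank_le_card_nonzero_cols[OF Y] by simp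
  also have "\<dots> \<le> card {k. k < T \<and> col (fourier_mat Z) k \<noteq> 0\<^sub>v n}"
    unfolding F Y_def by (intro card_mono nonzero_cols_hartley_subset[OF A]) simp
  finally have rank: "vec_space.rank n (corr_mat Z) \<le> 2 * d0" using fourier_sparse by simp
  have "\<exists>W \<in> orth_mats T. map_mat complex_of_real (pad_zero_cols X T) =
      complex_of_real (1 / sqrt (real T)) \<cdot>\<^sub>m (fourier_mat Z * Ksqrt T * map_mat complex_of_real W)"
    if X: "is_ASE (corr_mat Z) (vec_space.rank n (corr_mat Z)) X" for X
  proof -
    obtain W where W: "W \<in> orth_mats T" and YW: "Y * W = pad_zero_cols X T"
      using is_ASE_gram_eq_mult_orth[OF Y X[unfolded R]] by blast
    have "complex_of_real (1 / sqrt (real T)) \<cdot>\<^sub>m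
        (fourier_mat Z * Ksqrt T * map_mat complex_of_real W)
        = map_mat complex_of_real (pad_zero_cols X T)"
      unfolding F YW[symmetric] Y_def
      by (rule scaled_dft_Ksqrt_mult[OF A]) (use W in \<open>simp add: orth_mats_def\<close>)
    from this[symmetric] W show ?thesis by blast
  qed
  with rank show ?thesis by blast
qed

end
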